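(* With the mesh, coefficients $a^{(n)}_{n-k}$ and DCC kernels $p^{(n)}_{n-k}$ as in the context (in particular $\tau_{n-1}\le\tau_n$ for $2\le n\le N$), the DCC kernels are positive definite: for every $1\le n\le N$ and every real sequence $w_1,\dots,w_n$, $$\sum_{k=1}^n w_k\sum_{j=1}^k p^{(k)}_{k-j}w_j\ge 0 .$$
   Context: Fix $T>0$, $0<\alpha<1$ and a mesh $0=t_0<t_1<\dots<t_N=T$ with step sizes $\tau_n=t_n-t_{n-1}$ satisfying $\tau_{n-1}\le\tau_n$ for $2\le n\le N$. Set $t_{-1/2}=t_0$, $t_{n-1/2}=t_{n-1}+\tau_n/2$ for $1\le n\le N$, $\tau_{1/2}=\tau_1/2$ and $\tau_{n-1/2}=(\tau_n+\tau_{n-1})/2$ for $n\ge 2$. Let $\omega_\gamma(t)=t^{\gamma-1}/\Gamma(\gamma)$ for $t>0$. For $1\le n\le N$ and $1\le k\le n$ define $$a^{(n)}_{n-k}=\frac{1}{\tau_{k-1/2}}\int_{t_{k-3/2}}^{t_{k-1/2}}\omega_{1-\alpha}(t_{n-1/2}-s)\,ds .$$ The discrete complementary convolution (DCC) kernels are defined by $p^{(n)}_0=1/a^{(n)}_0$ and $p^{(n)}_{n-k}=\frac{1}{a^{(k)}_0}\sum_{j=k+1}^n\big(a^{(j)}_{j-k-1}-a^{(j)}_{j-k}\big)p^{(n)}_{n-j}$ for $1\le k\le n-1$; equivalently $\sum_{j=k}^n p^{(n)}_{n-j}a^{(j)}_{j-k}=1$ for all $1\le k\le n$. *)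

theory Defs
  imports "HOL-Analysis.Analysis"
begin

definition tau :: "(nat \<Rightarrow> real) \<Rightarrow> nat \<Rightarrow> real" where
  "tau t n = t n - t (n - 1)"

text \<open>tmid t k = t_{k-1/2}; tmid t 0 = t_{-1/2} = t_0.\<close>
definition tmid :: "(nat \<Rightarrow> real) \<Rightarrow> nat \<Rightarrow> real" where
  "tmid t k = (if k = 0 then t 0 else t (k - 1) + tau t k / 2)"

text \<open>tauh t k = tau_{k-1/2}.\<close>
definition tauh :: "(nat \<Rightarrow> real) \<Rightarrow> nat \<Rightarrow> real" where
  "tauh t k = (if k = 1 then tau t 1 / 2 else (tau t k + tau t (k - 1)) / 2)"

definition omega :: "real \<Rightarrow> real \<Rightarrow> real" where
  "omega \<gamma> s = (if s > 0 then s powr (\<gamma> - 1) / Gamma \<gamma> else 0)"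

text \<open>acoef t \<alpha> n k = a^{(n)}_{n-k}.\<close>
definition acoef :: "(nat \<Rightarrow> real) \<Rightarrow> real \<Rightarrow> nat \<Rightarrow> nat \<Rightarrow> real" where
  "acoef t \<alpha> n k = (1 / tauh t k) *
     integral {tmid t (k - 1) .. tmid t k} (\<lambda>s. omega (1 - \<alpha>) (tmid t n - s))"

text \<open>pdcc t \<alpha> n m = p^{(n)}_m, defined by recursion on m = n - k:
  p^{(n)}_0 = 1/a^{(n)}_0 and, with k = n - (m+1),
  p^{(n)}_{n-k} = 1/a^{(k)}_0 * sum_{j=k+1}^n (a^{(j)}_{j-k-1} - a^{(j)}_{j-k}) p^{(n)}_{n-j}
  (the sum is reindexed by i = n - j).\<close>
fun pdcc :: "(nat \<Rightarrow> real) \<Rightarrow> real \<Rightarrow> nat \<Rightarrow> nat \<Rightarrow> real" where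
  "pdcc t \<alpha> n 0 = 1 / acoef t \<alpha> n n"
| "pdcc t \<alpha> n (Suc m) =
     (1 / acoef t \<alpha> (n - Suc m) (n - Suc m)) *
     (\<Sum>i\<le>m. (acoef t \<alpha> (n - i) (n - Suc m + 1) - acoef t \<alpha> (n - i) (n - Suc m)) * pdcc t \<alpha> n i)"

text \<open>P t \<alpha> n k = p^{(n)}_{n-k}.\<close>
definition P :: "(nat \<Rightarrow> real) \<Rightarrow> real \<Rightarrow> nat \<Rightarrow> nat \<Rightarrow> real" where
  "P t \<alpha> n k = pdcc t \<alpha> n (n - k)"

end

theory Submission
  imports Defs
begin

(* The coefficient a^(m)_(m-k) is the divided difference of omega_(2-alpha), a primitive of the
   decreasing kernel omega_(1-alpha), between the points t_(m-1/2) - t_(k-1/2) and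
   t_(m-1/2) - t_(k-3/2). Concavity of omega_(2-alpha) makes these coefficients positive,
   nondecreasing in k along each row and, because the steps are nondecreasing, nonincreasing
   along diagonals. The DCC kernels are the left inverse of the lower triangular matrix (a^(m)_(m-k)),
   so writing w = A (v_k - v_(k-1)) with v_0 = 0 turns the quadratic form into
   sum_m v_m sum_k a^(m)_(m-k) (v_k - v_(k-1)). Summation by parts along each row bounds twice
   this from below by sum_m sum_k a^(m)_(m-k) (v_k^2 - v_(k-1)^2), and the diagonal monotonicity
   telescopes that to at least sum_k a^(n)_(n-k) v_k^2 >= 0. *)

definition chord_slope :: "(real \<Rightarrow> real) \<Rightarrow> real \<Rightarrow> real \<Rightarrow> real" where
  "chord_slope f y z = (f z - f y) / (z - y)"

context
  fixes f f' :: "real \<Rightarrow> real" and a :: real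
  assumes continuous: "continuous_on {a..} f"
    and derivative: "\<And>x. a < x \<Longrightarrow> (f has_real_derivative f' x) (at x)"
begin

lemma chord_slope_mean_value:
  assumes "a \<le> y" "y < z"
  obtains \<xi> where "y < \<xi>" "\<xi> < z" "chord_slope f y z = f' \<xi>"
proof -
  have "continuous_on {y..z} f"
    using continuous by (rule continuous_on_subset) (use assms in auto)
  then obtain l \<xi> where \<xi>: "y < \<xi>" "\<xi> < z" "DERIV f \<xi> :> l" "f z - f y = (z - y) * l"
    using MVT[OF \<open>y < z\<close>] derivative assms real_differentiable_def by (metis le_less_trans)
  have "l = f' \<xi>"
    using DERIV_unique[OF \<xi>(3) derivative] \<xi> assms by simp
  with \<xi> assms show thesis
    by (intro that[of \<xi>]) (auto simp: chord_slope_def)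
qed

lemma chord_slope_pos:
  assumes "\<And>x. a < x \<Longrightarrow> 0 < f' x" "a \<le> y" "y < z"
  shows "0 < chord_slope f y z"
  by (rule chord_slope_mean_value[OF assms(2,3)]) (use assms in auto)

context
  assumes antitone: "\<And>x y. a < x \<Longrightarrow> x \<le> y \<Longrightarrow> f' y \<le> f' x"
begin

lemma chord_slope_three_chords:
  assumes "a \<le> y" "y < z" "z < w"
  shows "chord_slope f z w \<le> chord_slope f y w" "chord_slope f y w \<le> chord_slope f y z"
proof -
  obtain \<xi>1 where \<xi>1: "y < \<xi>1" "\<xi>1 < z" "chord_slope f y z = f' \<xi>1"
    using chord_slope_mean_value assms by blast
  obtain \<xi>2 where \<xi>2: "z < \<xi>2" "\<xi>2 < w" "chord_slope f z w = f' \<xi>2"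
    using chord_slope_mean_value[of z w] assms by auto
  have le: "chord_slope f z w \<le> chord_slope f y z"
    using antitone[of \<xi>1 \<xi>2] \<xi>1 \<xi>2 assms by simp
  have split: "(w - y) * chord_slope f y w = (z - y) * chord_slope f y z + (w - z) * chord_slope f z w"
    using assms by (simp add: chord_slope_def)
  have "(w - y) * chord_slope f z w \<le> (w - y) * chord_slope f y w"
    using split mult_left_mono[OF le, of "z - y"] assms by (simp add: algebra_simps)
  then show "chord_slope f z w \<le> chord_slope f y w"
    using assms by simp
  have "(w - y) * chord_slope f y w \<le> (w - y) * chord_slope f y z"
    using split mult_left_mono[OF le, of "w - z"] assms by (simp add: algebra_simps)
  then show "chord_slope f y w \<le> chord_slope f y z"
    using assms by simp
qed

lemma chord_slope_antimono:
  assumes "a \<le> y1" "y1 \<le> y2" "z1 \<le> z2" "y1 < z1" "y2 < z2"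
  shows "chord_slope f y2 z2 \<le> chord_slope f y1 z1"
proof -
  have "chord_slope f y1 z2 \<le> chord_slope f y1 z1"
    using chord_slope_three_chords(2)[of y1 z1 z2] assms by (cases "z1 = z2") auto
  moreover have "chord_slope f y2 z2 \<le> chord_slope f y1 z2"
    using chord_slope_three_chords(1)[of y1 y2 z2] assms by (cases "y1 = y2") auto
  ultimately show ?thesis
    by linarith
qed

end

end

lemma omega_pos: "0 < \<gamma> \<Longrightarrow> 0 < x \<Longrightarrow> 0 < omega \<gamma> x"
  by (simp add: omega_def)

lemma omega_antimono:
  assumes "0 < \<gamma>" "\<gamma> \<le> 1" "0 < x" "x \<le> y"
  shows "omega \<gamma> y \<le> omega \<gamma> x"
proof -
  have "y powr (\<gamma> - 1) \<le> x powr (\<gamma> - 1)"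
    by (rule powr_mono2') (use assms in auto)
  then show ?thesis
    using assms by (simp add: omega_def divide_right_mono)
qed

lemma omega_succ_eq:
  assumes "0 < \<gamma>" "0 \<le> x"
  shows "omega (\<gamma> + 1) x = x powr \<gamma> / Gamma (\<gamma> + 1)"
  using assms by (auto simp: omega_def)

lemma continuous_on_omega_succ:
  assumes "0 < \<gamma>"
  shows "continuous_on {0..} (omega (\<gamma> + 1))"
proof -
  have "continuous_on {0..} (\<lambda>x::real. x powr \<gamma>)"
    using assms by (intro continuous_on_powr') (auto intro: continuous_intros)
  moreover have "Gamma (\<gamma> + 1) \<noteq> 0"
    using Gamma_real_pos[of "\<gamma> + 1"] assms by linarith
  ultimately have "continuous_on {0..} (\<lambda>x::real. x powr \<gamma> / Gamma (\<gamma> + 1))"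
    by (auto intro: continuous_on_divide continuous_on_const)
  moreover have "continuous_on {0..} (omega (\<gamma> + 1)) = continuous_on {0..} (\<lambda>x. x powr \<gamma> / Gamma (\<gamma> + 1))"
    by (rule continuous_on_cong) (auto simp: omega_succ_eq assms)
  ultimately show ?thesis
    by simp
qed

lemma has_real_derivative_omega_succ:
  assumes "0 < \<gamma>" "0 < x"
  shows "(omega (\<gamma> + 1) has_real_derivative omega \<gamma> x) (at x)"
proof -
  have Gamma: "Gamma (\<gamma> + 1) = \<gamma> * Gamma \<gamma>"
    using assms by (intro Gamma_plus1) (auto elim!: nonpos_Ints_cases)
  have "((\<lambda>x. x powr \<gamma> / Gamma (\<gamma> + 1)) has_real_derivative
          \<gamma> * x powr (\<gamma> - 1) / Gamma (\<gamma> + 1)) (at x)"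
    by (intro DERIV_cdivide has_real_derivative_powr assms)
  moreover have "\<gamma> * x powr (\<gamma> - 1) / Gamma (\<gamma> + 1) = omega \<gamma> x"
    using assms by (simp add: Gamma omega_def)
  ultimately show ?thesis
    by (rule_tac has_field_derivative_transform_within_open[where S = "{0<..}"])
       (use assms omega_succ_eq in auto)
qed

lemma integral_omega:
  assumes "0 < \<gamma>" "c \<le> d" "d \<le> m"
  shows "integral {c..d} (\<lambda>s. omega \<gamma> (m - s)) = omega (\<gamma> + 1) (m - c) - omega (\<gamma> + 1) (m - d)"
proof -
  have "((\<lambda>s. omega \<gamma> (m - s)) has_integral
          (- omega (\<gamma> + 1) (m - d)) - (- omega (\<gamma> + 1) (m - c))) {c..d}"
  proof (rule fundamental_theorem_of_calculus_interior[OF assms(2)])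
    show "continuous_on {c..d} (\<lambda>s. - omega (\<gamma> + 1) (m - s))"
      using assms by (intro continuous_intros continuous_on_compose2[OF continuous_on_omega_succ]) auto
    fix x assume x: "x \<in> {c<..<d}"
    have "((\<lambda>s. - omega (\<gamma> + 1) (m - s)) has_real_derivative - (omega \<gamma> (m - x) * (0 - 1))) (at x)"
      by (intro derivative_intros DERIV_chain2[OF has_real_derivative_omega_succ]) (use assms x in auto)
    then show "((\<lambda>s. - omega (\<gamma> + 1) (m - s)) has_vector_derivative omega \<gamma> (m - x)) (at x)"
      by (simp add: has_real_derivative_iff_has_vector_derivative)
  qed
  then show ?thesis
    by (simp add: integral_unique)
qed

lemma tmid_diff: "tmid t k - tmid t (k - 1) = tauh t k"
proof (cases "k \<le> 1")
  case False
  then have "k - 1 - 1 = k - 2" "k - 1 \<noteq> 0" "k \<noteq> 0" "k \<noteq> 1"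
    by auto
  then show ?thesis
    by (simp add: tmid_def tauh_def tau_def field_simps)
qed (auto simp: tmid_def tauh_def tau_def le_Suc_eq)

locale graded_mesh =
  fixes t :: "nat \<Rightarrow> real" and N :: nat
  assumes mesh_strict: "\<And>i. 1 \<le> i \<Longrightarrow> i \<le> N \<Longrightarrow> t (i - 1) < t i"
    and tau_mono: "\<And>i. 2 \<le> i \<Longrightarrow> i \<le> N \<Longrightarrow> tau t (i - 1) \<le> tau t i"
begin

lemma tau_pos: "1 \<le> k \<Longrightarrow> k \<le> N \<Longrightarrow> 0 < tau t k"
  using mesh_strict by (simp add: tau_def)

lemma tauh_pos: "1 \<le> k \<Longrightarrow> k \<le> N \<Longrightarrow> 0 < tauh t k"
  using tau_pos[of k] tau_pos[of "k - 1"] by (cases "k = 1") (simp_all add: tauh_def add_pos_pos)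

lemma tauh_le_Suc: "1 \<le> k \<Longrightarrow> Suc k \<le> N \<Longrightarrow> tauh t k \<le> tauh t (Suc k)"
  using tau_pos[of "Suc 1"] tau_mono[of k] tau_mono[of "Suc k"]
  by (cases "k = 1") (auto simp: tauh_def)

lemma tauh_mono:
  assumes "1 \<le> j" "j \<le> k" "k \<le> N"
  shows "tauh t j \<le> tauh t k"
  using assms(2,3)
proof (induction k rule: dec_induct)
  case (step k)
  then show ?case
    using tauh_le_Suc[of k] assms(1) by simp
qed simp

lemma tmid_mono: "j \<le> k \<Longrightarrow> k \<le> N \<Longrightarrow> tmid t j \<le> tmid t k"
proof (induction k rule: dec_induct)
  case (step k)
  then show ?case
    using tmid_diff[of t "Suc k"] tauh_pos[of "Suc k"] by simp
qed simp

context
  fixes \<alpha> :: real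
  assumes \<alpha>_pos: "0 < \<alpha>" and \<alpha>_less_1: "\<alpha> < 1"
begin

lemma acoef_eq_chord_slope:
  assumes "1 \<le> k" "k \<le> m" "m \<le> N"
  shows "acoef t \<alpha> m k = chord_slope (omega (1 - \<alpha> + 1)) (tmid t m - tmid t k) (tmid t m - tmid t (k - 1))"
proof -
  have "integral {tmid t (k - 1)..tmid t k} (\<lambda>s. omega (1 - \<alpha>) (tmid t m - s))
      = omega (1 - \<alpha> + 1) (tmid t m - tmid t (k - 1)) - omega (1 - \<alpha> + 1) (tmid t m - tmid t k)"
    by (rule integral_omega) (use \<alpha>_less_1 tmid_mono[of "k - 1" k] tmid_mono[of k m] assms in auto)
  moreover have "(tmid t m - tmid t (k - 1)) - (tmid t m - tmid t k) = tauh t k"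
    using tmid_diff[of t k] by simp
  ultimately show ?thesis
    by (simp add: acoef_def chord_slope_def)
qed

lemma acoef_pos:
  assumes "1 \<le> k" "k \<le> m" "m \<le> N"
  shows "0 < acoef t \<alpha> m k"
  unfolding acoef_eq_chord_slope[OF assms]
  by (rule chord_slope_pos[OF continuous_on_omega_succ has_real_derivative_omega_succ omega_pos])
     (use \<alpha>_less_1 tmid_mono[of k m] tmid_diff[of t k] tauh_pos[of k] assms in auto)

lemma acoef_le_Suc:
  assumes "1 \<le> k" "k < m" "m \<le> N"
  shows "acoef t \<alpha> m k \<le> acoef t \<alpha> m (Suc k)"
proof -
  have "chord_slope (omega (1 - \<alpha> + 1)) (tmid t m - tmid t k) (tmid t m - tmid t (k - 1))
      \<le> chord_slope (omega (1 - \<alpha> + 1)) (tmid t m - tmid t (Suc k)) (tmid t m - tmid t k)"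
    by (rule chord_slope_antimono[OF continuous_on_omega_succ has_real_derivative_omega_succ omega_antimono])
       (use \<alpha>_pos \<alpha>_less_1 tmid_mono[of "Suc k" m] tmid_diff[of t k] tauh_pos[of k]
          tmid_diff[of t "Suc k"] tauh_pos[of "Suc k"] assms in auto)
  then show ?thesis
    using acoef_eq_chord_slope[of k m] acoef_eq_chord_slope[of "Suc k" m] assms by simp
qed

lemma acoef_Suc_le:
  assumes "1 \<le> k" "k \<le> m" "Suc m \<le> N"
  shows "acoef t \<alpha> (Suc m) (Suc k) \<le> acoef t \<alpha> m k"
proof -
  have "chord_slope (omega (1 - \<alpha> + 1)) (tmid t (Suc m) - tmid t (Suc k)) (tmid t (Suc m) - tmid t k)
      \<le> chord_slope (omega (1 - \<alpha> + 1)) (tmid t m - tmid t k) (tmid t m - tmid t (k - 1))"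
    by (rule chord_slope_antimono[OF continuous_on_omega_succ has_real_derivative_omega_succ omega_antimono])
       (use \<alpha>_pos \<alpha>_less_1 tauh_mono[of "Suc k" "Suc m"] tauh_mono[of k "Suc m"] tmid_mono[of k m]
          tmid_diff[of t k] tauh_pos[of k] tmid_diff[of t "Suc k"] tauh_pos[of "Suc k"]
          tmid_diff[of t "Suc m"] assms in auto)
  then show ?thesis
    using acoef_eq_chord_slope[of k m] acoef_eq_chord_slope[of "Suc k" "Suc m"] assms by simp
qed

end

end

lemma P_recurrence:
  assumes "k < m" "acoef t \<alpha> k k \<noteq> 0"
  shows "P t \<alpha> m k * acoef t \<alpha> k k = (\<Sum>j = Suc k..m. (acoef t \<alpha> j (Suc k) - acoef t \<alpha> j k) * P t \<alpha> m j)"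
proof -
  obtain d where d: "m - k = Suc d"
    using assms(1) by (metis Suc_diff_Suc)
  then have "m - Suc d = k"
    by simp
  then have "P t \<alpha> m k * acoef t \<alpha> k k
      = (\<Sum>i\<le>d. (acoef t \<alpha> (m - i) (Suc k) - acoef t \<alpha> (m - i) k) * pdcc t \<alpha> m i)"
    using assms(2) by (simp add: P_def d)
  also have "\<dots> = (\<Sum>j = Suc k..m. (acoef t \<alpha> j (Suc k) - acoef t \<alpha> j k) * P t \<alpha> m j)"
    by (rule sum.reindex_bij_witness[of _ "\<lambda>j. m - j" "\<lambda>i. m - i"])
       (use d in \<open>auto simp del: pdcc.simps simp: P_def\<close>)
  finally show ?thesis .
qed

lemma P_acoef_sum_eq_1:
  assumes nonzero: "\<And>j. 1 \<le> j \<Longrightarrow> j \<le> m \<Longrightarrow> acoef t \<alpha> j j \<noteq> 0"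
    and "1 \<le> k" "k \<le> m"
  shows "(\<Sum>j = k..m. P t \<alpha> m j * acoef t \<alpha> j k) = 1"
  using \<open>k \<le> m\<close> \<open>1 \<le> k\<close>
proof (induction k rule: inc_induct)
  case base
  then show ?case
    using nonzero[of m] by (simp add: P_def)
next
  case (step k)
  have "(\<Sum>j = k..m. P t \<alpha> m j * acoef t \<alpha> j k)
      = P t \<alpha> m k * acoef t \<alpha> k k + (\<Sum>j = Suc k..m. P t \<alpha> m j * acoef t \<alpha> j k)"
    using step.hyps by (simp add: sum.atLeast_Suc_atMost)
  also have "\<dots> = (\<Sum>j = Suc k..m. P t \<alpha> m j * acoef t \<alpha> j (Suc k))"
    using P_recurrence[of k m] nonzero[of k] step
    by (simp add: sum.distrib[symmetric] algebra_simps)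
  also have "\<dots> = 1"
    using step by simp
  finally show ?case .
qed

lemma sum_triangle_swap:
  fixes f :: "nat \<Rightarrow> nat \<Rightarrow> 'a::comm_monoid_add"
  shows "(\<Sum>j = 1..m. \<Sum>k = 1..j. f j k) = (\<Sum>k = 1..m. \<Sum>j = k..m. f j k)"
proof (induction m)
  case (Suc m)
  have "(\<Sum>k = 1..Suc m. \<Sum>j = k..Suc m. f j k) = (\<Sum>k = 1..m. (\<Sum>j = k..m. f j k) + f (Suc m) k) + f (Suc m) (Suc m)"
    by simp
  then show ?case
    using Suc by (simp add: sum.distrib)
qed simp

fun forward_subst :: "(nat \<Rightarrow> nat \<Rightarrow> real) \<Rightarrow> (nat \<Rightarrow> real) \<Rightarrow> nat \<Rightarrow> real" where
  "forward_subst a w n =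
     (if n = 0 then 0 else (w n - (\<Sum>k = 1..<n. a n k * forward_subst a w k)) / a n n)"

declare forward_subst.simps[simp del]

lemma forward_subst_solves:
  assumes "1 \<le> n" "a n n \<noteq> 0"
  shows "(\<Sum>k = 1..n. a n k * forward_subst a w k) = w n"
proof -
  have "{1..n} = insert n {1..<n}"
    using assms(1) by auto
  then have "(\<Sum>k = 1..n. a n k * forward_subst a w k)
      = a n n * forward_subst a w n + (\<Sum>k = 1..<n. a n k * forward_subst a w k)"
    by simp
  also have "a n n * forward_subst a w n = w n - (\<Sum>k = 1..<n. a n k * forward_subst a w k)"
    using assms by (subst forward_subst.simps) simp
  finally show ?thesis
    by simp
qed

lemma lower_triangular_difference_solution:
  fixes a :: "nat \<Rightarrow> nat \<Rightarrow> real"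
  assumes "\<And>m. 1 \<le> m \<Longrightarrow> m \<le> n \<Longrightarrow> a m m \<noteq> 0"
  obtains v where "v 0 = 0" "\<And>m. 1 \<le> m \<Longrightarrow> m \<le> n \<Longrightarrow> w m = (\<Sum>k = 1..m. a m k * (v k - v (k - 1)))"
proof -
  define v where "v m = (\<Sum>k = 1..m. forward_subst a w k)" for m
  have diff: "v k - v (k - 1) = forward_subst a w k" if "1 \<le> k" for k
    using that by (cases k) (simp_all add: v_def)
  show thesis
  proof (rule that)
    show "v 0 = 0"
      by (simp add: v_def)
    fix m assume m: "1 \<le> m" "m \<le> n"
    then show "w m = (\<Sum>k = 1..m. a m k * (v k - v (k - 1)))"
      using forward_subst_solves[of m a w] assms[OF m] diff by simp
  qed
qed

lemma triangular_left_inverse_apply: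
  fixes a :: "nat \<Rightarrow> nat \<Rightarrow> real" and p v w :: "nat \<Rightarrow> real"
  assumes inverse: "\<And>k. 1 \<le> k \<Longrightarrow> k \<le> m \<Longrightarrow> (\<Sum>j = k..m. p j * a j k) = 1"
    and v0: "v 0 = 0"
    and w: "\<And>j. 1 \<le> j \<Longrightarrow> j \<le> m \<Longrightarrow> w j = (\<Sum>k = 1..j. a j k * (v k - v (k - 1)))"
  shows "(\<Sum>j = 1..m. p j * w j) = v m"
proof -
  have "(\<Sum>j = 1..m. p j * w j) = (\<Sum>j = 1..m. \<Sum>k = 1..j. p j * a j k * (v k - v (k - 1)))"
    using w by (simp add: sum_distrib_left mult.assoc)
  also have "\<dots> = (\<Sum>k = 1..m. (\<Sum>j = k..m. p j * a j k) * (v k - v (k - 1)))"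
    unfolding sum_triangle_swap by (simp add: sum_distrib_right)
  also have "\<dots> = (\<Sum>k = 1..m. v k - v (k - 1))"
    using inverse by simp
  also have "\<dots> = v m"
    using v0 by (induction m) simp_all
  finally show ?thesis .
qed

lemma sum_weighted_backward_diff_ge:
  fixes c x :: "nat \<Rightarrow> real"
  assumes "1 \<le> m" "0 \<le> c 1" "\<And>k. 1 \<le> k \<Longrightarrow> k < m \<Longrightarrow> c k \<le> c (Suc k)" "\<And>k. 0 \<le> x k"
  shows "- c m * x m \<le> (\<Sum>k = 1..m. c k * (x (k - 1) - x k))"
  using assms
proof (induction m rule: nat_induct_at_least)
  case base
  then show ?case
    using mult_nonneg_nonneg[of "c 1" "x 0"] by (simp add: algebra_simps)
next
  case (Suc m)
  have "0 \<le> (c (Suc m) - c m) * x m"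
    using Suc.prems Suc.hyps by simp
  then show ?case
    using Suc by (simp add: algebra_simps)
qed

lemma sum_weighted_diff_squares_le:
  fixes c v :: "nat \<Rightarrow> real"
  assumes "1 \<le> n" "0 \<le> c 1" "\<And>k. 1 \<le> k \<Longrightarrow> k < n \<Longrightarrow> c k \<le> c (Suc k)"
  shows "(\<Sum>k = 1..n. c k * ((v k)\<^sup>2 - (v (k - 1))\<^sup>2)) \<le> 2 * v n * (\<Sum>k = 1..n. c k * (v k - v (k - 1)))"
proof -
  define x where "x k = (v n - v k)\<^sup>2" for k
  have "- c n * x n \<le> (\<Sum>k = 1..n. c k * (x (k - 1) - x k))"
    by (rule sum_weighted_backward_diff_ge) (use assms in \<open>auto simp: x_def\<close>)
  then have "0 \<le> (\<Sum>k = 1..n. c k * (x (k - 1) - x k))"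
    by (simp add: x_def)
  also have "\<dots> = 2 * v n * (\<Sum>k = 1..n. c k * (v k - v (k - 1))) - (\<Sum>k = 1..n. c k * ((v k)\<^sup>2 - (v (k - 1))\<^sup>2))"
    unfolding sum_distrib_left sum_subtractf[symmetric]
    by (rule sum.cong) (auto simp: x_def power2_eq_square algebra_simps)
  finally show ?thesis
    by simp
qed

context
  fixes a :: "nat \<Rightarrow> nat \<Rightarrow> real" and n :: nat
  assumes nonneg: "\<And>m k. 1 \<le> k \<Longrightarrow> k \<le> m \<Longrightarrow> m \<le> n \<Longrightarrow> 0 \<le> a m k"
    and row_mono: "\<And>m k. 1 \<le> k \<Longrightarrow> k < m \<Longrightarrow> m \<le> n \<Longrightarrow> a m k \<le> a m (Suc k)"
    and diagonal_antimono: "\<And>m k. 1 \<le> k \<Longrightarrow> k \<le> m \<Longrightarrow> Suc m \<le> n \<Longrightarrow> a (Suc m) (Suc k) \<le> a m k"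
begin

lemma last_row_le_telescoped:
  fixes z :: "nat \<Rightarrow> real"
  assumes "z 0 = 0" "\<And>k. 0 \<le> z k" "M \<le> n"
  shows "(\<Sum>k = 1..M. a M k * z k) \<le> (\<Sum>m = 1..M. \<Sum>k = 1..m. a m k * (z k - z (k - 1)))"
  using \<open>M \<le> n\<close>
proof (induction M)
  case (Suc M)
  have shifted: "(\<Sum>k = 1..Suc M. a (Suc M) k * z (k - 1)) = (\<Sum>k = 1..M. a (Suc M) (Suc k) * z k)"
    using sum.shift_bounds_cl_Suc_ivl[of "\<lambda>k. a (Suc M) k * z (k - 1)" 0 M] assms(1)
    by (simp add: sum.atLeast_Suc_atMost)
  have "(\<Sum>k = 1..M. a (Suc M) (Suc k) * z k) \<le> (\<Sum>k = 1..M. a M k * z k)"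
    by (rule sum_mono) (use diagonal_antimono Suc.prems assms(2) in \<open>auto intro!: mult_right_mono\<close>)
  then show ?case
    using Suc shifted by (simp add: right_diff_distrib sum_subtractf)
qed simp

lemma difference_form_nonneg:
  fixes v :: "nat \<Rightarrow> real"
  assumes "v 0 = 0"
  shows "0 \<le> (\<Sum>m = 1..n. v m * (\<Sum>k = 1..m. a m k * (v k - v (k - 1))))"
proof -
  have "0 \<le> (\<Sum>k = 1..n. a n k * (v k)\<^sup>2)"
    by (rule sum_nonneg) (use nonneg in auto)
  also have "\<dots> \<le> (\<Sum>m = 1..n. \<Sum>k = 1..m. a m k * ((v k)\<^sup>2 - (v (k - 1))\<^sup>2))"
    by (rule last_row_le_telescoped[where z = "\<lambda>k. (v k)\<^sup>2"]) (use assms in auto)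
  also have "\<dots> \<le> (\<Sum>m = 1..n. 2 * v m * (\<Sum>k = 1..m. a m k * (v k - v (k - 1))))"
    by (rule sum_mono, rule sum_weighted_diff_squares_le) (use nonneg row_mono in auto)
  finally show ?thesis
    by (simp add: sum_distrib_left[symmetric] mult.assoc)
qed

end

(* Only the step sizes enter the coefficients. *)
theorem lemma2p5:
  fixes t :: "nat \<Rightarrow> real" and T \<alpha> :: real and N n :: nat and w :: "nat \<Rightarrow> real"
  assumes "0 < T" and "0 < \<alpha>" and "\<alpha> < 1"
    and "t 0 = 0" and "t N = T"
    and "\<forall>i\<in>{1..N}. t (i - 1) < t i"
    and "\<forall>i\<in>{2..N}. tau t (i - 1) \<le> tau t i"
    and "1 \<le> n" and "n \<le> N"
  shows "(\<Sum>k = 1..n. w k * (\<Sum>j = 1..k. P t \<alpha> k j * w j)) \<ge> 0"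
proof -
  interpret graded_mesh t N
    using assms(6,7) by unfold_locales auto
  let ?a = "acoef t \<alpha>"
  have diagonal: "?a m m \<noteq> 0" if "1 \<le> m" "m \<le> N" for m
    using acoef_pos[OF assms(2,3) that(1) order.refl that(2)] by simp
  obtain v where v0: "v 0 = 0"
    and w: "\<And>m. 1 \<le> m \<Longrightarrow> m \<le> n \<Longrightarrow> w m = (\<Sum>k = 1..m. ?a m k * (v k - v (k - 1)))"
    using lower_triangular_difference_solution[of n ?a] diagonal assms(9) by auto
  have "(\<Sum>j = 1..m. P t \<alpha> m j * w j) = v m" if "1 \<le> m" "m \<le> n" for m
    by (rule triangular_left_inverse_apply[OF P_acoef_sum_eq_1 v0 w]) (use diagonal that assms(9) in auto)
  then have "(\<Sum>k = 1..n. w k * (\<Sum>j = 1..k. P t \<alpha> k j * w j))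
      = (\<Sum>m = 1..n. v m * (\<Sum>k = 1..m. ?a m k * (v k - v (k - 1))))"
    using w by (auto intro!: sum.cong)
  also have "0 \<le> \<dots>"
    by (rule difference_form_nonneg)
       (use acoef_pos acoef_le_Suc acoef_Suc_le v0 assms(2,3,9) in \<open>auto intro: less_imp_le\<close>)
  finally show ?thesis
    by simp
qed

end
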